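(* Let $H$ be a separable infinite-dimensional Hilbert space with a fixed orthonormal basis $(e_i)_{i\in\mathbb{N}}$, and let $\mathcal{L}_2$ be the Hilbert–Schmidt operators on $H$, identified with their matrices in this basis. Let $A=(a_{ij})_{i,j\in\mathbb{N}}$ be a Schur multiplier of $\mathcal{L}_2$ such that the map $S_A\colon\mathcal{L}_2\to\mathcal{L}_2$, $S_A(x)=A\circ x$, is injective. Then $S_A(xy)=S_A(x)S_A(y)$ for all $x,y\in\mathcal{L}_2$ if and only if $a_{ij}=f(i)/f(j)$ for all $i,j$, for some sequence $f\colon\mathbb{N}\to\mathbb{C}$ that is bounded and bounded away from zero.
   Context: $\mathcal{L}_2=\{x\in B(H): \tau(|x|^2)<\infty\}$, where $\tau$ is the canonical trace. $A\circ x$ denotes the entrywise product of the matrix $A$ with the matrix of $x$ in the fixed basis. A Schur multiplier of $\mathcal{L}_2$ is an infinite matrix $A$ such that $A\circ x\in\mathcal{L}_2$ for every $x\in\mathcal{L}_2$; these are exactly the matrices with uniformly bounded entries. *)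

theory Defs
  imports "HOL-Analysis.Analysis"
begin

text \<open>Operators on H are identified with their matrices in the fixed orthonormal
basis (e_i), i.e. with functions nat => nat => complex.  The Hilbert-Schmidt
class L2 = {x : tau(|x|^2) < infinity} corresponds to the square-summable
matrices, since tau(x* x) = sum_{i,j} |x_ij|^2.\<close>

type_synonym cmat = "nat \<Rightarrow> nat \<Rightarrow> complex"

definition HS :: "cmat set" where
  "HS = {x. (\<lambda>(i, j). (cmod (x i j))\<^sup>2) summable_on (UNIV :: (nat \<times> nat) set)}"

text \<open>Matrix of the operator product xy (absolutely convergent for x, y in HS).\<close>
definition mat_mult :: "cmat \<Rightarrow> cmat \<Rightarrow> cmat" where
  "mat_mult x y = (\<lambda>i j. \<Sum>\<^sub>\<infinity>k. x i k * y k j)"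

definition schur :: "cmat \<Rightarrow> cmat \<Rightarrow> cmat" where
  "schur A x = (\<lambda>i j. A i j * x i j)"

definition schur_multiplier_L2 :: "cmat \<Rightarrow> bool" where
  "schur_multiplier_L2 A \<longleftrightarrow> (\<forall>x\<in>HS. schur A x \<in> HS)"

end

theory Submission
  imports Defs
begin

text \<open>Multiplicativity of S_A, tested on matrix units e_ik e_kj = e_ij, says that A is a
multiplicative cocycle, A_ij = A_ik A_kj; injectivity forbids zero entries, so A_ii = 1 and
A_ij = f i / f j with f i = A_i0 and 1 / f j = A_0j.  The entries of a Schur multiplier of L2
are bounded (otherwise putting 1/A_ij on a sequence of entries with |A_ij| > 2^k gives an
element of L2 mapped outside L2), and this bounds both f and 1/f.  Conversely, the factor
f i / f j of each entry passes through the sum defining the matrix product.\<close>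

lemma unbounded_obtains_fast_injective_sequence:
  fixes g :: "'a \<Rightarrow> 'b::real_normed_vector"
  assumes "\<not> (\<exists>M. \<forall>i. norm (g i) \<le> M)"
  obtains s :: "nat \<Rightarrow> 'a" where "inj s" and "\<And>k. 2 ^ k < norm (g (s k))"
proof -
  have unbounded: "\<exists>i. M < norm (g i)" for M
    using assms by (meson not_le)
  \<comment> \<open>making the norms strictly increasing is what makes s injective\<close>
  obtain s where s: "\<And>k. 2 ^ k < norm (g (s k))"
    and s_incr: "\<And>k. norm (g (s k)) < norm (g (s (Suc k)))"
    using dependent_nat_choice[of "\<lambda>k i. 2 ^ k < norm (g i)" "\<lambda>_ i i'. norm (g i) < norm (g i')"]
      unbounded[of "max _ _"] by (metis max.strict_boundedE)
  have "strict_mono (norm \<circ> g \<circ> s)"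
    using s_incr by (simp add: strict_mono_Suc_iff)
  then have "inj s"
    by (metis inj_on_imageI2 strict_mono_imp_inj_on)
  with s show thesis
    using that by blast
qed

lemma square_summable_inverse_on_fast_sequence:
  fixes g :: "'a \<Rightarrow> 'b::real_normed_div_algebra"
  assumes "inj s" and s: "\<And>k. 2 ^ k < norm (g (s k))"
  shows "(\<lambda>i. (norm (if i \<in> range s then inverse (g i) else 0))\<^sup>2) summable_on UNIV"
proof -
  define v where "v i = (if i \<in> range s then inverse (g i) else 0)" for i
  have "(\<lambda>i. (norm (v i))\<^sup>2) summable_on range s"
  proof (subst summable_on_reindex[OF \<open>inj s\<close>], rule summable_on_comparison_test)
    show "(\<lambda>k. (1/2::real) ^ k) summable_on UNIV"
      by (subst summable_on_UNIV_nonneg_real_iff) (auto intro: summable_geometric)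
    fix k
    have "norm (v (s k)) = inverse (norm (g (s k)))"
      by (simp add: v_def norm_inverse)
    also have "\<dots> \<le> inverse (2 ^ k)"
      using s[of k] by (intro le_imp_inverse_le) auto
    also have "\<dots> = (1/2) ^ k"
      by (simp add: power_one_over inverse_eq_divide)
    finally have "norm (v (s k)) \<le> (1/2) ^ k" .
    moreover have "(1/2::real) ^ k \<le> 1"
      by (simp add: power_le_one)
    ultimately have "(norm (v (s k)))\<^sup>2 \<le> norm (v (s k))"
      by (simp add: power2_eq_square mult_left_le)
    with \<open>norm (v (s k)) \<le> (1/2) ^ k\<close>
    show "((\<lambda>i. (norm (v i))\<^sup>2) \<circ> s) k \<le> (1/2) ^ k"
      by simp
  qed simp
  then show ?thesis
    unfolding v_def[symmetric]
    by (subst summable_on_cong_neutral[where T = "range s"]) (auto simp: v_def)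
qed

lemma bounded_if_multiplier_of_square_summable:
  fixes g :: "'a \<Rightarrow> 'b::real_normed_div_algebra"
  assumes mult: "\<And>v. (\<lambda>i. (norm (v i))\<^sup>2) summable_on UNIV \<Longrightarrow>
                      (\<lambda>i. (norm (g i * v i))\<^sup>2) summable_on UNIV"
  shows "\<exists>M. \<forall>i. norm (g i) \<le> M"
proof (rule ccontr)
  assume unbounded: "\<not> (\<exists>M. \<forall>i. norm (g i) \<le> M)"
  obtain s where "inj s" and s: "\<And>k. 2 ^ k < norm (g (s k))"
    using unbounded_obtains_fast_injective_sequence[OF unbounded] by blast
  define v where "v i = (if i \<in> range s then inverse (g i) else 0)" for i
  have "(\<lambda>i. (norm (g i * v i))\<^sup>2) summable_on range s"
    using mult[OF square_summable_inverse_on_fast_sequence[OF \<open>inj s\<close> s]]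
      summable_on_subset_banach unfolding v_def by blast
  moreover have "g (s k) \<noteq> 0" for k
    using s[of k] by (metis norm_zero not_less_iff_gr_or_eq zero_less_numeral zero_less_power)
  then have "(\<lambda>i. (norm (g i * v i))\<^sup>2) summable_on range s \<longleftrightarrow> (\<lambda>_. 1::real) summable_on range s"
    by (intro summable_on_cong) (auto simp: v_def)
  ultimately show False
    using infsum_diverge_constant[of "range s" "1::real"] \<open>inj s\<close>
    by (simp add: range_inj_infinite)
qed

definition mat_unit :: "nat \<Rightarrow> nat \<Rightarrow> complex \<Rightarrow> cmat" where
  "mat_unit i j p = (\<lambda>a b. if a = i \<and> b = j then p else 0)"

lemma mat_unit_in_HS: "mat_unit i j p \<in> HS"
proof -
  have "(\<lambda>(a, b). (cmod (mat_unit i j p a b))\<^sup>2) summable_on UNIV \<longleftrightarrow>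
      (\<lambda>(a, b). (cmod (mat_unit i j p a b))\<^sup>2) summable_on {(i, j)}"
    by (rule summable_on_cong_neutral) (auto simp: mat_unit_def split: if_splits)
  then show ?thesis
    by (simp add: HS_def)
qed

lemma schur_mat_unit: "schur A (mat_unit i j p) = mat_unit i j (A i j * p)"
  by (auto simp: schur_def mat_unit_def intro!: ext)

lemma mat_mult_mat_unit: "mat_mult (mat_unit i k p) (mat_unit k j q) i j = p * q"
proof -
  have "(\<Sum>\<^sub>\<infinity>l. mat_unit i k p i l * mat_unit k j q l j) = (\<Sum>\<^sub>\<infinity>l\<in>{k}. p * q)"
    by (rule infsum_cong_neutral) (auto simp: mat_unit_def)
  then show ?thesis
    by (simp add: mat_mult_def)
qed

lemma schur_multiplier_L2_bounded:
  assumes "schur_multiplier_L2 A"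
  shows "\<exists>M. \<forall>i j. cmod (A i j) \<le> M"
proof -
  have "\<exists>M. \<forall>ij. cmod (case_prod A ij) \<le> M"
  proof (rule bounded_if_multiplier_of_square_summable)
    fix v :: "nat \<times> nat \<Rightarrow> complex"
    assume "(\<lambda>ij. (cmod (v ij))\<^sup>2) summable_on UNIV"
    then have "curry v \<in> HS"
      by (simp add: HS_def case_prod_unfold)
    then have "schur A (curry v) \<in> HS"
      using assms by (simp add: schur_multiplier_L2_def)
    then show "(\<lambda>ij. (cmod (case_prod A ij * v ij))\<^sup>2) summable_on UNIV"
      by (simp add: HS_def schur_def case_prod_unfold)
  qed
  then show ?thesis
    by auto
qed

lemma schur_injective_nonzero:
  assumes "inj_on (schur A) HS"
  shows "A i j \<noteq> 0"
proof
  assume "A i j = 0"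
  then have "schur A (mat_unit i j 1) = schur A (mat_unit i j 0)"
    by (simp add: schur_mat_unit)
  then have "mat_unit i j 1 = mat_unit i j 0"
    using assms mat_unit_in_HS by (blast dest: inj_onD)
  then show False
    by (metis mat_unit_def one_neq_zero)
qed

lemma schur_multiplicative_cocycle:
  assumes "\<forall>x\<in>HS. \<forall>y\<in>HS. schur A (mat_mult x y) = mat_mult (schur A x) (schur A y)"
  shows "A i j = A i k * A k j"
proof -
  have "A i j = schur A (mat_mult (mat_unit i k 1) (mat_unit k j 1)) i j"
    by (simp add: schur_def mat_mult_mat_unit)
  also have "\<dots> = mat_mult (mat_unit i k (A i k)) (mat_unit k j (A k j)) i j"
    using assms mat_unit_in_HS by (simp add: schur_mat_unit)
  also have "\<dots> = A i k * A k j"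
    by (rule mat_mult_mat_unit)
  finally show ?thesis .
qed

lemma nonzero_cocycle_eq_ratio:
  fixes A :: "'a \<Rightarrow> 'a \<Rightarrow> 'b::field"
  assumes cocycle: "\<And>i j k. A i j = A i k * A k j" and nonzero: "\<And>i j. A i j \<noteq> 0"
  shows "A a j * A j a = 1" and "A i j = A i a / A j a"
proof -
  have "A a a = 1"
    using cocycle[of a a a] nonzero[of a a] by simp
  then show inverse: "A a j * A j a = 1"
    using cocycle[of a a j] by simp
  show "A i j = A i a / A j a"
    using cocycle[of i j a] nonzero inverse by (simp add: eq_divide_eq mult.assoc)
qed

lemma schur_ratio_mat_mult:
  assumes "\<And>i. f i \<noteq> 0"
  shows "schur (\<lambda>i j. f i / f j) (mat_mult x y) =
    mat_mult (schur (\<lambda>i j. f i / f j) x) (schur (\<lambda>i j. f i / f j) y)"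
proof (intro ext)
  fix i j
  have "(\<lambda>k. f i / f k * x i k * (f k / f j * y k j)) = (\<lambda>k. f i / f j * (x i k * y k j))"
    using assms by (auto simp: field_simps)
  then have "mat_mult (schur (\<lambda>i j. f i / f j) x) (schur (\<lambda>i j. f i / f j) y) i j =
      (\<Sum>\<^sub>\<infinity>k. f i / f j * (x i k * y k j))"
    by (simp add: schur_def mat_mult_def)
  also have "\<dots> = f i / f j * mat_mult x y i j"
    unfolding mat_mult_def by (rule infsum_cmult_right')
  finally show "schur (\<lambda>i j. f i / f j) (mat_mult x y) i j =
      mat_mult (schur (\<lambda>i j. f i / f j) x) (schur (\<lambda>i j. f i / f j) y) i j"
    by (simp add: schur_def)
qed

lemma bounded_nonzero_cocycle_eq_ratio:
  fixes A :: "'a \<Rightarrow> 'a \<Rightarrow> 'b::real_normed_field"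
  assumes cocycle: "\<And>i j k. A i j = A i k * A k j" and nonzero: "\<And>i j. A i j \<noteq> 0"
    and bounded: "\<And>i j. norm (A i j) \<le> M"
  shows "\<exists>f. (\<exists>M. \<forall>i. norm (f i) \<le> M) \<and> (\<exists>c>0. \<forall>i. c \<le> norm (f i)) \<and>
    (\<forall>i j. A i j = f i / f j)"
proof -
  fix a :: 'a
  note ratio = nonzero_cocycle_eq_ratio[where A = A and a = a, OF cocycle nonzero]
  have lower: "1 \<le> M * norm (A i a)" for i
  proof -
    have "1 = norm (A a i * A i a)"
      by (simp add: ratio(1))
    also have "\<dots> \<le> M * norm (A i a)"
      unfolding norm_mult using bounded by (intro mult_right_mono) auto
    finally show ?thesis .
  qed
  have "0 \<le> M"
    using bounded[of a a] norm_ge_zero order_trans by blast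
  with lower[of a] have "0 < M"
    by (cases "M = 0") auto
  show ?thesis
  proof (intro exI conjI)
    show "\<forall>i. norm (A i a) \<le> M"
      using bounded by blast
    show "0 < 1 / M"
      using \<open>0 < M\<close> by simp
    show "\<forall>i. 1 / M \<le> norm (A i a)"
      using lower \<open>0 < M\<close> by (simp add: divide_le_eq mult.commute)
    show "\<forall>i j. A i j = A i a / A j a"
      using ratio(2) by blast
  qed
qed

theorem proposition4p1:
  fixes A :: cmat
  assumes "schur_multiplier_L2 A"
    and "inj_on (schur A) HS"
  shows "(\<forall>x\<in>HS. \<forall>y\<in>HS. schur A (mat_mult x y) = mat_mult (schur A x) (schur A y))
     \<longleftrightarrow> (\<exists>f :: nat \<Rightarrow> complex.
            (\<exists>M. \<forall>i. cmod (f i) \<le> M) \<and> (\<exists>c>0. \<forall>i. c \<le> cmod (f i)) \<and>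
            (\<forall>i j. A i j = f i / f j))"
proof
  assume "\<forall>x\<in>HS. \<forall>y\<in>HS. schur A (mat_mult x y) = mat_mult (schur A x) (schur A y)"
  moreover obtain M where "\<And>i j. cmod (A i j) \<le> M"
    using schur_multiplier_L2_bounded[OF assms(1)] by blast
  ultimately show "\<exists>f :: nat \<Rightarrow> complex.
      (\<exists>M. \<forall>i. cmod (f i) \<le> M) \<and> (\<exists>c>0. \<forall>i. c \<le> cmod (f i)) \<and> (\<forall>i j. A i j = f i / f j)"
    using bounded_nonzero_cocycle_eq_ratio[where A = A]
      schur_multiplicative_cocycle schur_injective_nonzero[OF assms(2)] by metis
next
  assume "\<exists>f :: nat \<Rightarrow> complex.
      (\<exists>M. \<forall>i. cmod (f i) \<le> M) \<and> (\<exists>c>0. \<forall>i. c \<le> cmod (f i)) \<and> (\<forall>i j. A i j = f i / f j)"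
  then obtain f c where "0 < c" and f_lower: "\<And>i. c \<le> cmod (f i)" and "\<forall>i j. A i j = f i / f j"
    by blast
  then have A_eq: "A = (\<lambda>i j. f i / f j)"
    by (intro ext) simp
  have "f i \<noteq> 0" for i
    using \<open>0 < c\<close> f_lower[of i] by auto
  then show "\<forall>x\<in>HS. \<forall>y\<in>HS. schur A (mat_mult x y) = mat_mult (schur A x) (schur A y)"
    unfolding A_eq using schur_ratio_mat_mult by blast
qed

end
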